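(* Let $X,Y$ be finite nonempty sets. Every $A\in\{-1,1\}^{X\times Y}$ satisfies $\|A\|_{\gamma_2}\ge\sqrt{\operatorname{Ldim}(A)}$.
   Context: The $\gamma_2$ factorization norm of a matrix $A$ is $\|A\|_{\gamma_2}=\min_{UV=A}\|U\|_{\mathrm{row}}\|V\|_{\mathrm{col}}$, where the minimum is over all factorizations $A=UV$, $\|U\|_{\mathrm{row}}$ is the largest Euclidean norm of a row of $U$ and $\|V\|_{\mathrm{col}}$ the largest Euclidean norm of a column of $V$. A mistake tree of depth $d$ over $X$ is a complete binary tree of depth $d$ in which each internal node $\nu$ is labelled with $x(\nu)\in X$ and each edge $e$ to a child is labelled with a sign $\sigma(e)\in\{-1,1\}$ ($-1$ for the left child, $+1$ for the right child). $A\in\{-1,1\}^{X\times Y}$ shatters such a tree if for every root-to-leaf path $(\nu_1,\dots,\nu_{d+1})$ there is $y\in Y$ with $A(x(\nu_i),y)=\sigma(\nu_i\nu_{i+1})$ for all $i\in[d]$. The Littlestone dimension $\operatorname{Ldim}(A)$ is the largest $d$ for which $A$ shatters a mistake tree of depth $d$. *)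

theory Defs
  imports Main "HOL.Real" "HOL.NthRoot"
begin

text \<open>Matrices indexed by finite sets X (rows) and Y (columns) are functions
  'a \<Rightarrow> 'b \<Rightarrow> real, only their values on X \<times> Y matter.\<close>

definition row_norm :: "'a set \<Rightarrow> nat \<Rightarrow> ('a \<Rightarrow> nat \<Rightarrow> real) \<Rightarrow> real" where
  "row_norm X k U = Max ((\<lambda>x. sqrt (\<Sum>i<k. (U x i)^2)) ` X)"

definition col_norm :: "'b set \<Rightarrow> nat \<Rightarrow> (nat \<Rightarrow> 'b \<Rightarrow> real) \<Rightarrow> real" where
  "col_norm Y k V = Max ((\<lambda>y. sqrt (\<Sum>i<k. (V i y)^2)) ` Y)"

definition is_factorization ::
  "'a set \<Rightarrow> 'b set \<Rightarrow> ('a \<Rightarrow> 'b \<Rightarrow> real) \<Rightarrow> nat \<Rightarrow> ('a \<Rightarrow> nat \<Rightarrow> real) \<Rightarrow> (nat \<Rightarrow> 'b \<Rightarrow> real) \<Rightarrow> bool" where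
  "is_factorization X Y A k U V \<longleftrightarrow> (\<forall>x\<in>X. \<forall>y\<in>Y. A x y = (\<Sum>i<k. U x i * V i y))"

definition gamma2 :: "'a set \<Rightarrow> 'b set \<Rightarrow> ('a \<Rightarrow> 'b \<Rightarrow> real) \<Rightarrow> real" where
  "gamma2 X Y A = Inf {row_norm X k U * col_norm Y k V | k U V. is_factorization X Y A k U V}"

text \<open>A mistake tree of depth d over X: internal nodes are identified by the sign
  sequence (list over {-1,1}) of the path from the root, of length < d; the label
  function assigns each internal node an element of X. The edge from a node p to
  its child p @ [s] carries the sign s (-1 left, +1 right).\<close>
definition sign_lists :: "nat \<Rightarrow> real list set" where
  "sign_lists n = {s. length s = n \<and> set s \<subseteq> {-1, 1}}"

definition mistake_tree :: "'a set \<Rightarrow> nat \<Rightarrow> (real list \<Rightarrow> 'a) \<Rightarrow> bool" where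
  "mistake_tree X d lab \<longleftrightarrow> (\<forall>n<d. \<forall>p\<in>sign_lists n. lab p \<in> X)"

definition shatters ::
  "'a set \<Rightarrow> 'b set \<Rightarrow> ('a \<Rightarrow> 'b \<Rightarrow> real) \<Rightarrow> nat \<Rightarrow> (real list \<Rightarrow> 'a) \<Rightarrow> bool" where
  "shatters X Y A d lab \<longleftrightarrow>
     (\<forall>s\<in>sign_lists d. \<exists>y\<in>Y. \<forall>i<d. A (lab (take i s)) y = s ! i)"

definition Ldim :: "'a set \<Rightarrow> 'b set \<Rightarrow> ('a \<Rightarrow> 'b \<Rightarrow> real) \<Rightarrow> nat" where
  "Ldim X Y A = (GREATEST d. \<exists>lab. mistake_tree X d lab \<and> shatters X Y A d lab)"

end

theory Submission
  imports Defs "HOL-Analysis.Convex"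
begin

text \<open>Let \<open>A = U V\<close> with rows \<open>u\<^sub>x\<close> of \<open>U\<close> of norm at most \<open>r\<close> and columns \<open>v\<^sub>y\<close> of \<open>V\<close>
  of norm at most \<open>c\<close>, and let a mistake tree of depth \<open>d\<close> be shattered. Walk down the tree,
  keeping the signed sum \<open>w = \<Sum>\<^sub>j s\<^sub>j u\<^sub>x\<^sub>j\<close> of the rows met so far, and at a node labelled
  \<open>x\<close> take the sign \<open>s\<close> opposite to that of \<open>\<langle>w, u\<^sub>x\<rangle>\<close>. Then \<open>|w|\<^sup>2\<close> grows by at most
  \<open>|u\<^sub>x|\<^sup>2 \<le> r\<^sup>2\<close> per step, so \<open>|w|\<^sup>2 \<le> d r\<^sup>2\<close> at the leaf. A column \<open>y\<close> realizing this
  path has \<open>\<langle>u\<^sub>x\<^sub>j, v\<^sub>y\<rangle> = A x\<^sub>j y = s\<^sub>j\<close>, hence \<open>\<langle>w, v\<^sub>y\<rangle> = d\<close>, and Cauchy-Schwarz gives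
  \<open>d \<le> \<surd>d r c\<close>.\<close>

lemma row_norm_bound:
  assumes "finite X" "x \<in> X"
  shows row_norm_nonneg: "0 \<le> row_norm X k U"
    and sum_sq_le_row_norm_sq: "(\<Sum>i<k. (U x i)^2) \<le> (row_norm X k U)^2"
proof -
  have le: "sqrt (\<Sum>i<k. (U x i)^2) \<le> row_norm X k U"
    unfolding row_norm_def using assms by (intro Max_ge) auto
  then show "0 \<le> row_norm X k U"
    using real_sqrt_ge_zero[OF sum_nonneg] by (meson order_trans zero_le_power2)
  show "(\<Sum>i<k. (U x i)^2) \<le> (row_norm X k U)^2"
    using le by (rule sqrt_le_D)
qed

lemma col_norm_bound:
  assumes "finite Y" "y \<in> Y"
  shows col_norm_nonneg: "0 \<le> col_norm Y k V"
    and sum_sq_le_col_norm_sq: "(\<Sum>i<k. (V i y)^2) \<le> (col_norm Y k V)^2"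
proof -
  have le: "sqrt (\<Sum>i<k. (V i y)^2) \<le> col_norm Y k V"
    unfolding col_norm_def using assms by (intro Max_ge) auto
  then show "0 \<le> col_norm Y k V"
    using real_sqrt_ge_zero[OF sum_nonneg] by (meson order_trans zero_le_power2)
  show "(\<Sum>i<k. (V i y)^2) \<le> (col_norm Y k V)^2"
    using le by (rule sqrt_le_D)
qed

lemma sum_sq_add_signed_le:
  fixes w u :: "'i \<Rightarrow> real"
  assumes "s * s = 1" and "s * (\<Sum>i\<in>I. w i * u i) \<le> 0"
  shows "(\<Sum>i\<in>I. (w i + s * u i)^2) \<le> (\<Sum>i\<in>I. (w i)^2) + (\<Sum>i\<in>I. (u i)^2)"
proof -
  have "(w i + s * u i)^2 = (w i)^2 + 2 * s * (w i * u i) + (s * s) * (u i)^2" for i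
    by (simp add: power2_eq_square algebra_simps)
  then have "(\<Sum>i\<in>I. (w i + s * u i)^2)
      = (\<Sum>i\<in>I. (w i)^2) + 2 * (s * (\<Sum>i\<in>I. w i * u i)) + (s * s) * (\<Sum>i\<in>I. (u i)^2)"
    by (simp add: sum.distrib sum_distrib_left mult.assoc)
  then show ?thesis
    using assms by simp
qed

definition path_vector :: "(real list \<Rightarrow> 'a) \<Rightarrow> ('a \<Rightarrow> nat \<Rightarrow> real) \<Rightarrow> real list \<Rightarrow> nat \<Rightarrow> real"
  where "path_vector lab U p i = (\<Sum>j<length p. p ! j * U (lab (take j p)) i)"

lemma path_vector_Nil [simp]: "path_vector lab U [] i = 0"
  by (simp add: path_vector_def)

lemma path_vector_snoc: "path_vector lab U (p @ [s]) i = path_vector lab U p i + s * U (lab p) i"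
  unfolding path_vector_def by (simp add: nth_append)

fun greedy_path :: "nat \<Rightarrow> (real list \<Rightarrow> 'a) \<Rightarrow> ('a \<Rightarrow> nat \<Rightarrow> real) \<Rightarrow> nat \<Rightarrow> real list"
  where
    "greedy_path k lab U 0 = []"
  | "greedy_path k lab U (Suc n) = (let p = greedy_path k lab U n in
       p @ [if (\<Sum>i<k. path_vector lab U p i * U (lab p) i) \<ge> 0 then -1 else 1])"

lemma greedy_path_in_sign_lists: "greedy_path k lab U n \<in> sign_lists n"
  by (induction n) (auto simp: sign_lists_def Let_def)

lemma take_greedy_path: "j \<le> n \<Longrightarrow> take j (greedy_path k lab U n) = greedy_path k lab U j"
proof (induction n)
  case (Suc n)
  have "length (greedy_path k lab U n) = n"
    using greedy_path_in_sign_lists[of k lab U n] by (simp add: sign_lists_def)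
  with Suc show ?case
    by (cases "j = Suc n") (auto simp: Let_def)
qed simp

lemma mistake_tree_label_greedy_path:
  "mistake_tree X d lab \<Longrightarrow> j < d \<Longrightarrow> lab (greedy_path k lab U j) \<in> X"
  using greedy_path_in_sign_lists unfolding mistake_tree_def by blast

lemma greedy_path_vector_sum_sq_le:
  assumes "finite X" "mistake_tree X d lab" "n \<le> d"
  shows "(\<Sum>i<k. (path_vector lab U (greedy_path k lab U n) i)^2) \<le> real n * (row_norm X k U)^2"
  using assms(3)
proof (induction n)
  case (Suc n)
  define p where "p = greedy_path k lab U n"
  define s :: real where "s = (if (\<Sum>i<k. path_vector lab U p i * U (lab p) i) \<ge> 0 then -1 else 1)"
  have "lab p \<in> X"
    unfolding p_def using Suc.prems assms(2) by (intro mistake_tree_label_greedy_path) auto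
  then have row: "(\<Sum>i<k. (U (lab p) i)^2) \<le> (row_norm X k U)^2"
    by (rule sum_sq_le_row_norm_sq[OF assms(1)])
  have "(\<Sum>i<k. (path_vector lab U (greedy_path k lab U (Suc n)) i)^2)
      = (\<Sum>i<k. (path_vector lab U p i + s * U (lab p) i)^2)"
    by (simp add: p_def s_def Let_def path_vector_snoc)
  also have "\<dots> \<le> (\<Sum>i<k. (path_vector lab U p i)^2) + (\<Sum>i<k. (U (lab p) i)^2)"
    by (rule sum_sq_add_signed_le) (auto simp: s_def)
  also have "\<dots> \<le> real n * (row_norm X k U)^2 + (row_norm X k U)^2"
    using Suc row by (simp add: p_def)
  finally show ?case
    by (simp add: algebra_simps)
qed simp

lemma path_vector_inner_realizing_column:
  assumes fac: "is_factorization X Y A k U V" and "y \<in> Y" and signs: "set s \<subseteq> {-1, 1}"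
    and realizes: "\<forall>j<length s. lab (take j s) \<in> X \<and> A (lab (take j s)) y = s ! j"
  shows "(\<Sum>i<k. path_vector lab U s i * V i y) = real (length s)"
proof -
  have "(\<Sum>i<k. path_vector lab U s i * V i y)
      = (\<Sum>i<k. \<Sum>j<length s. s ! j * U (lab (take j s)) i * V i y)"
    unfolding path_vector_def by (simp add: sum_distrib_right)
  also have "\<dots> = (\<Sum>j<length s. s ! j * (\<Sum>i<k. U (lab (take j s)) i * V i y))"
    by (subst sum.swap) (simp add: sum_distrib_left mult.assoc)
  also have "\<dots> = (\<Sum>j<length s. s ! j * s ! j)"
  proof (intro sum.cong refl)
    fix j assume "j \<in> {..<length s}"
    then have "lab (take j s) \<in> X" and "A (lab (take j s)) y = s ! j"
      using realizes by auto
    then show "s ! j * (\<Sum>i<k. U (lab (take j s)) i * V i y) = s ! j * s ! j"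
      using fac \<open>y \<in> Y\<close> unfolding is_factorization_def by simp
  qed
  also have "\<dots> = (\<Sum>j<length s. 1)"
    using signs nth_mem by (intro sum.cong refl) fastforce
  finally show ?thesis
    by simp
qed

lemma sqrt_shattered_depth_le_factorization_norm:
  assumes "finite X" "X \<noteq> {}" "finite Y"
    and fac: "is_factorization X Y A k U V"
    and tree: "mistake_tree X d lab" and shatters: "shatters X Y A d lab"
  shows "sqrt (real d) \<le> row_norm X k U * col_norm Y k V"
proof -
  define r where "r = row_norm X k U"
  define c where "c = col_norm Y k V"
  define s where "s = greedy_path k lab U d"
  define w where "w = path_vector lab U s"
  have s: "s \<in> sign_lists d"
    unfolding s_def by (rule greedy_path_in_sign_lists)
  then obtain y where "y \<in> Y" and y: "\<forall>j<d. A (lab (take j s)) y = s ! j"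
    using shatters unfolding shatters_def by blast
  have "\<forall>j<d. lab (take j s) \<in> X"
    using tree by (simp add: s_def take_greedy_path mistake_tree_label_greedy_path)
  then have inner: "(\<Sum>i<k. w i * V i y) = real d"
    using path_vector_inner_realizing_column[OF fac \<open>y \<in> Y\<close>] s y
    unfolding w_def sign_lists_def by auto
  obtain x where "x \<in> X"
    using assms(2) by blast
  then have "0 \<le> r"
    unfolding r_def by (rule row_norm_nonneg[OF assms(1)])
  have "0 \<le> c"
    unfolding c_def by (rule col_norm_nonneg[OF assms(3) \<open>y \<in> Y\<close>])
  have w_norm: "(\<Sum>i<k. (w i)^2) \<le> real d * r^2"
    unfolding w_def s_def r_def by (rule greedy_path_vector_sum_sq_le[OF assms(1) tree order_refl])
  have v_norm: "(\<Sum>i<k. (V i y)^2) \<le> c^2"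
    unfolding c_def by (rule sum_sq_le_col_norm_sq[OF assms(3) \<open>y \<in> Y\<close>])
  have "(real d)^2 \<le> (\<Sum>i<k. (w i)^2) * (\<Sum>i<k. (V i y)^2)"
    using Cauchy_Schwarz_ineq_sum[of w "\<lambda>i. V i y" "{..<k}"] by (simp only: inner)
  also have "\<dots> \<le> (real d * r^2) * c^2"
    by (rule mult_mono[OF w_norm v_norm]) (simp_all add: sum_nonneg)
  finally have "(real d)^2 \<le> real d * (r * c)^2"
    by (simp add: power_mult_distrib)
  then have "real d \<le> (r * c)^2"
    by (cases "d = 0") (simp_all add: power2_eq_square)
  with \<open>0 \<le> r\<close> \<open>0 \<le> c\<close> show ?thesis
    unfolding r_def c_def by (intro real_le_lsqrt) auto
qed

lemma is_factorization_exists: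
  assumes "finite X"
  shows "\<exists>k U V. is_factorization X Y A k U V"
proof -
  obtain n :: nat and f where X: "X = f ` {i. i < n}" and inj: "inj_on f {i. i < n}"
    using finite_imp_nat_seg_image_inj_on[OF assms] by blast
  define U :: "'a \<Rightarrow> nat \<Rightarrow> real" where "U = (\<lambda>x i. if f i = x then 1 else 0)"
  have "is_factorization X Y A n U (\<lambda>i y. A (f i) y)"
    unfolding is_factorization_def
  proof (intro ballI)
    fix x y assume "x \<in> X"
    then obtain j where j: "j < n" "f j = x"
      using X by auto
    have "(\<Sum>i<n. U x i * A (f i) y) = (\<Sum>i\<in>{j}. U x i * A (f i) y)"
      using inj j by (intro sum.mono_neutral_right) (auto simp: U_def inj_on_def)
    then show "A x y = (\<Sum>i<n. U x i * A (f i) y)"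
      using j by (simp add: U_def)
  qed
  then show ?thesis
    by blast
qed

lemma gamma2_ge:
  assumes "finite X"
    and "\<And>k U V. is_factorization X Y A k U V \<Longrightarrow> b \<le> row_norm X k U * col_norm Y k V"
  shows "b \<le> gamma2 X Y A"
  unfolding gamma2_def
  using assms is_factorization_exists[OF assms(1)] by (intro cInf_greatest) auto

lemma shattered_paths_eq_if_same_column:
  assumes "length s = d" "length t = d"
    and "\<forall>i<d. A (lab (take i s)) y = s ! i" "\<forall>i<d. A (lab (take i t)) y = t ! i"
  shows "s = t"
proof -
  have "take i s = take i t" if "i \<le> d" for i
    using that
  proof (induction i)
    case (Suc i)
    then have "i < d" and "take i s = take i t"
      by simp_all
    then have "s ! i = t ! i"
      using assms(3,4) by metis
    with Suc assms(1,2) show ?case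
      by (simp add: take_Suc_conv_app_nth)
  qed simp
  from this[of d] show ?thesis
    using assms(1,2) by simp
qed

lemma card_sign_lists: "card (sign_lists n) = 2 ^ n"
proof -
  have "sign_lists n = {xs. set xs \<subseteq> {-1::real, 1} \<and> length xs = n}"
    unfolding sign_lists_def by auto
  then show ?thesis
    using card_lists_length_eq[of "{-1::real, 1}" n] by (simp add: numeral_2_eq_2)
qed

lemma shatters_two_pow_le_card:
  assumes "finite Y" and "shatters X Y A d lab"
  shows "2 ^ d \<le> card Y"
proof -
  obtain g where g: "\<forall>s\<in>sign_lists d. g s \<in> Y \<and> (\<forall>i<d. A (lab (take i s)) (g s) = s ! i)"
    using assms(2) unfolding shatters_def Bex_def by (metis bchoice)
  have "inj_on g (sign_lists d)"
  proof (rule inj_onI)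
    fix s t assume "s \<in> sign_lists d" "t \<in> sign_lists d" "g s = g t"
    then have "length s = d" "length t = d"
      and "\<forall>i<d. A (lab (take i s)) (g s) = s ! i" "\<forall>i<d. A (lab (take i t)) (g s) = t ! i"
      using g by (auto simp: sign_lists_def)
    then show "s = t"
      by (rule shattered_paths_eq_if_same_column)
  qed
  then have "card (g ` sign_lists d) = 2 ^ d"
    by (simp add: card_image card_sign_lists)
  moreover have "g ` sign_lists d \<subseteq> Y"
    using g by blast
  ultimately show ?thesis
    using card_mono[OF assms(1)] by metis
qed

lemma Ldim_attained:
  assumes "finite Y" "Y \<noteq> {}"
  shows "\<exists>lab. mistake_tree X (Ldim X Y A) lab \<and> shatters X Y A (Ldim X Y A) lab"
  unfolding Ldim_def
proof (rule GreatestI_ex_nat[where P = "\<lambda>d. \<exists>lab. mistake_tree X d lab \<and> shatters X Y A d lab"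
      and b = "card Y"])
  have "mistake_tree X 0 lab \<and> shatters X Y A 0 lab" for lab
    using assms(2) by (auto simp: mistake_tree_def shatters_def)
  then show "\<exists>d lab. mistake_tree X d lab \<and> shatters X Y A d lab"
    by blast
  show "d \<le> card Y" if "\<exists>lab. mistake_tree X d lab \<and> shatters X Y A d lab" for d
  proof -
    from that obtain lab where "shatters X Y A d lab"
      by blast
    then have "2 ^ d \<le> card Y"
      by (rule shatters_two_pow_le_card[OF assms(1)])
    then show ?thesis
      using less_exp[of d] by linarith
  qed
qed

theorem proposition2p2:
  fixes X :: "'a set" and Y :: "'b set" and A :: "'a \<Rightarrow> 'b \<Rightarrow> real"
  assumes "finite X" "X \<noteq> {}" "finite Y" "Y \<noteq> {}"
    and "\<forall>x\<in>X. \<forall>y\<in>Y. A x y \<in> {-1, 1}"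
  shows "gamma2 X Y A \<ge> sqrt (real (Ldim X Y A))"
proof -
  obtain lab where "mistake_tree X (Ldim X Y A) lab" "shatters X Y A (Ldim X Y A) lab"
    using Ldim_attained[OF assms(3,4)] by blast
  then show ?thesis
    using assms(1-3) by (intro gamma2_ge sqrt_shattered_depth_le_factorization_norm)
qed

end
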